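(* Let $t$ be a power of two, let $h:[u]\to[t]$ be a random hash function, let $S\subseteq[u]$ with $|S|<t$ be stored in a linear probing table of size $t$ using $h$, and let $q\in[u]$. Suppose that for each $\ell\in\{0,1,\dots,\log_2 t\}$ there is a number $P_\ell$ such that for every $y\in[t]$ and every $\ell$-interval $I$, \[\Pr\Big[\,|\{x\in S\setminus\{q\}: h(x)\in I\}|\ge \tfrac34 2^\ell \;\Big|\; h(q)=y\Big]\le P_\ell.\] Then the expected number of positions from $h(q)$ up to the first empty position at or after $h(q)$ (and hence the expected time to search, insert or delete $q$) is \[O\Big(1+\sum_{\ell=0}^{\log_2 t}2^\ell P_\ell\Big),\] where the constant in the $O$ is absolute.
   Context: Let $[s]=\{0,\dots,s-1\}$. Linear probing: a table of size $t$ with hash function $h:[u]\to[t]$; positions are indexed by nonnegative integers (wrap-around ignored), each either empty or holding one key. Keys of $S$ are inserted starting from an empty table; a key $x$ is inserted by scanning positions $h(x),h(x)+1,\dots$ and placing $x$ in the first empty one. Search, insertion and deletion of a key $x$ take time at most proportional to the number of positions from $h(x)$ to the first empty position at or after $h(x)$. For an integer $\ell\ge0$, an $\ell$-interval is a set of positions $[i2^\ell,(i+1)2^\ell)$ for an integer $i\ge0$. *)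

theory Defs
  imports "HOL-Probability.Probability_Mass_Function"
begin

text \<open>A linear probing table: positions are natural numbers (no wrap-around);
  each position is empty (None) or holds one key.\<close>
type_synonym lp_table = "nat \<Rightarrow> nat option"

definition first_empty :: "lp_table \<Rightarrow> nat \<Rightarrow> nat" where
  "first_empty T p = (LEAST j. p \<le> j \<and> T j = None)"

definition lp_insert :: "(nat \<Rightarrow> nat) \<Rightarrow> lp_table \<Rightarrow> nat \<Rightarrow> lp_table" where
  "lp_insert h T x = T(first_empty T (h x) := Some x)"

definition lp_build :: "(nat \<Rightarrow> nat) \<Rightarrow> nat list \<Rightarrow> lp_table" where
  "lp_build h xs = fold (\<lambda>x T. lp_insert h T x) xs (\<lambda>_. None)"

definition probe_len :: "(nat \<Rightarrow> nat) \<Rightarrow> lp_table \<Rightarrow> nat \<Rightarrow> nat" where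
  "probe_len h T q = first_empty T (h q) - h q + 1"

definition ell_interval :: "nat \<Rightarrow> nat \<Rightarrow> nat set" where
  "ell_interval l i = {i * 2 ^ l ..< (i + 1) * 2 ^ l}"

end

theory Submission
  imports Defs
begin

text \<open>If the probe from \<open>h q\<close> runs over \<open>R \<ge> 5\<close> occupied positions, extend it to the left to a
  maximal run \<open>[a, f)\<close>; every key stored there hashes into it, so at least \<open>f - a\<close> keys hash
  into \<open>[a, f)\<close>. Choose \<open>l\<close> with \<open>5 \<cdot> 2^l \<le> f - a < 10 \<cdot> 2^l\<close>; by pigeonhole one of the five
  \<open>l\<close>-intervals from the one containing \<open>a\<close> onwards receives at least \<open>3/4 \<cdot> 2^l\<close> keys other
  than \<open>q\<close>, and it is one of 15 \<open>l\<close>-intervals determined by \<open>h q\<close>. Hence the probe length is at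
  most \<open>5 + 10 \<Sum>\<^sub>l 2^l [some interval near h q is crowded]\<close>; conditioning on \<open>h q\<close> and a
  union bound over the 15 intervals gives \<open>5 + 150 \<Sum>\<^sub>l 2^l P\<^sub>l\<close>.\<close>

definition lp_valid :: "(nat \<Rightarrow> nat) \<Rightarrow> nat set \<Rightarrow> lp_table \<Rightarrow> bool" where
  "lp_valid h K T \<longleftrightarrow>
     (\<forall>p x. T p = Some x \<longrightarrow> x \<in> K \<and> h x \<le> p \<and> (\<forall>z\<in>{h x..<p}. T z \<noteq> None)) \<and>
     (\<forall>p p' x. T p = Some x \<longrightarrow> T p' = Some x \<longrightarrow> p = p') \<and>
     finite {p. T p \<noteq> None}"

lemma lp_validD:
  assumes "lp_valid h K T"
  shows "T p = Some x \<Longrightarrow> x \<in> K" "T p = Some x \<Longrightarrow> h x \<le> p"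
    "T p = Some x \<Longrightarrow> z \<in> {h x..<p} \<Longrightarrow> T z \<noteq> None"
    "T p = Some x \<Longrightarrow> T p' = Some x \<Longrightarrow> p = p'"
    "finite {p. T p \<noteq> None}"
  using assms unfolding lp_valid_def by blast+

lemma first_empty_spec:
  assumes "finite {p. T p \<noteq> None}"
  shows "p \<le> first_empty T p" "z \<in> {p..<first_empty T p} \<Longrightarrow> T z \<noteq> None"
proof -
  define m where "m = Suc (Max (insert p {p. T p \<noteq> None}))"
  have "x \<le> Max (insert p {p. T p \<noteq> None})" if "x = p \<or> T x \<noteq> None" for x
    using that assms by (intro Max_ge) auto
  then have "p \<le> m" "T m = None"
    unfolding m_def by (metis le_SucI, metis Suc_n_not_le_n)
  then have ex: "\<exists>j. p \<le> j \<and> T j = None" by blast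
  show "p \<le> first_empty T p"
    using LeastI_ex[OF ex] unfolding first_empty_def by simp
  show "z \<in> {p..<first_empty T p} \<Longrightarrow> T z \<noteq> None"
    unfolding first_empty_def using not_less_Least by fastforce
qed

lemma lp_valid_insert:
  assumes valid: "lp_valid h K T" and "x \<notin> K"
  shows "lp_valid h (insert x K) (lp_insert h T x)"
proof -
  let ?f = "first_empty T (h x)"
  note fin = lp_validD(5)[OF valid]
  have x_absent: "T p \<noteq> Some x" for p
    using lp_validD(1)[OF valid] \<open>x \<notin> K\<close> by blast
  have fe: "h x \<le> ?f" "\<And>z. z \<in> {h x..<?f} \<Longrightarrow> T z \<noteq> None"
    using first_empty_spec[OF fin] by blast+
  let ?T = "T(?f := Some x)"
  have "y \<in> insert x K \<and> h y \<le> p \<and> (\<forall>z\<in>{h y..<p}. ?T z \<noteq> None)" if "?T p = Some y" for p y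
    using that fe lp_validD(1-3)[OF valid] by (cases "p = ?f") auto
  moreover have "p = p'" if "?T p = Some y" "?T p' = Some y" for p p' y
    using that x_absent lp_validD(4)[OF valid] by (auto split: if_splits)
  moreover have "finite {p. ?T p \<noteq> None}"
    by (rule finite_subset[of _ "insert ?f {p. T p \<noteq> None}"]) (use fin in auto)
  ultimately show ?thesis
    unfolding lp_valid_def lp_insert_def by blast
qed

lemma lp_valid_build:
  assumes "distinct xs"
  shows "lp_valid h (set xs) (lp_build h xs)"
  using assms
proof (induction xs rule: rev_induct)
  case Nil
  then show ?case by (simp add: lp_valid_def lp_build_def)
next
  case (snoc x xs)
  then show ?case
    using lp_valid_insert[of h "set xs" "lp_build h xs" x] by (simp add: lp_build_def)
qed

lemma run_start_exists:
  fixes T :: lp_table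
  assumes "T p \<noteq> None"
  obtains a where "a \<le> p" "a = 0 \<or> T (a - 1) = None" "\<forall>z\<in>{a..p}. T z \<noteq> None"
proof -
  have "\<exists>a\<le>p. (a = 0 \<or> T (a - 1) = None) \<and> (\<forall>z\<in>{a..p}. T z \<noteq> None)"
    using assms
  proof (induction p)
    case 0
    then show ?case by simp
  next
    case (Suc p)
    show ?case
    proof (cases "T p = None")
      case True
      with Suc.prems show ?thesis by (intro exI[of _ "Suc p"]) simp
    next
      case False
      with Suc.IH obtain a where "a \<le> p" "a = 0 \<or> T (a - 1) = None" "\<forall>z\<in>{a..p}. T z \<noteq> None"
        by blast
      moreover have "{a..Suc p} = insert (Suc p) {a..p}"
        using \<open>a \<le> p\<close> by auto
      ultimately show ?thesis using Suc.prems by (intro exI[of _ a]) simp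
    qed
  qed
  with that show ?thesis by blast
qed

text \<open>A key stored in a run that starts right after an empty position (or at 0) hashes
  into the run, so a run of length \<open>b - a\<close> needs \<open>b - a\<close> keys hashing into it.\<close>
lemma run_length_le_card_hashed:
  assumes valid: "lp_valid h K T" and "finite K"
    and start: "a = 0 \<or> T (a - 1) = None" and full: "\<forall>z\<in>{a..<b}. T z \<noteq> None"
  shows "b - a \<le> card {x\<in>K. h x \<in> {a..<b}}"
proof -
  define key where "key z = the (T z)" for z
  have key: "T z = Some (key z)" if "z \<in> {a..<b}" for z
    using full that unfolding key_def by auto
  have "inj_on key {a..<b}"
    by (rule inj_onI) (metis key lp_validD(4)[OF valid])
  moreover have "key z \<in> {x\<in>K. h x \<in> {a..<b}}" if z: "z \<in> {a..<b}" for z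
  proof -
    have "key z \<in> K" "h (key z) \<le> z"
      using lp_validD(1,2)[OF valid key[OF z]] by simp_all
    moreover have "a \<le> h (key z)"
    proof (rule ccontr)
      assume "\<not> a \<le> h (key z)"
      then have "a \<noteq> 0" "a - 1 \<in> {h (key z)..<z}" using z by auto
      then show False using start lp_validD(3)[OF valid key[OF z]] by blast
    qed
    ultimately show ?thesis using z by auto
  qed
  ultimately show ?thesis
    using card_inj_on_le[of key "{a..<b}"] \<open>finite K\<close> by (simp add: image_subset_iff)
qed

definition crowded :: "nat set \<Rightarrow> nat \<Rightarrow> nat \<Rightarrow> nat \<Rightarrow> (nat \<Rightarrow> nat) set" where
  "crowded S q l i =
     {h. real (card {x \<in> S - {q}. h x \<in> ell_interval l i}) \<ge> 3 / 4 * 2 ^ l}"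

text \<open>Indices of the \<open>l\<close>-intervals where a crowded interval found in a run through \<open>y\<close> of
  length \<open>< 10 \<cdot> 2^l\<close> can lie: from 10 intervals before the one containing \<open>y\<close> to 4 after it.\<close>
definition window :: "nat \<Rightarrow> nat \<Rightarrow> nat set" where
  "window y l = {i. y div 2 ^ l \<le> i + 10 \<and> i \<le> y div 2 ^ l + 4}"

lemma finite_window: "finite (window y l)"
  by (rule finite_subset[of _ "{..y div 2 ^ l + 4}"]) (auto simp: window_def)

lemma card_window_le: "card (window y l) \<le> 15"
proof -
  have "card (window y l) \<le> card {y div 2 ^ l - 10 .. y div 2 ^ l + 4}"
    by (rule card_mono) (auto simp: window_def)
  then show ?thesis by simp
qed

lemma exists_dyadic_scale:
  assumes "5 \<le> (R::nat)"
  shows "\<exists>l. 5 * 2 ^ l \<le> R \<and> R < 10 * 2 ^ l"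
  using assms
proof (induction R rule: less_induct)
  case (less R)
  show ?case
  proof (cases "R < 10")
    case True
    with less.prems show ?thesis by (intro exI[of _ 0]) simp
  next
    case False
    then have "5 \<le> R div 2" "R div 2 < R" by auto
    then obtain l where "5 * 2 ^ l \<le> R div 2" "R div 2 < 10 * 2 ^ l"
      using less.IH by blast
    then have "5 * 2 ^ Suc l \<le> R" "R < 10 * 2 ^ Suc l" by auto
    then show ?thesis by blast
  qed
qed

lemma exists_large_part:
  assumes "finite I" "I \<noteq> {}" "A \<subseteq> (\<Union>i\<in>I. Y i)" "finite (\<Union>i\<in>I. Y i)"
  shows "\<exists>i\<in>I. card A \<le> card I * card (Y i)"
proof (rule ccontr)
  assume "\<not> ?thesis"
  then have small: "card I * card (Y i) < card A" if "i \<in> I" for i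
    using that by fastforce
  have "card I * card A \<le> card I * (\<Sum>i\<in>I. card (Y i))"
    using card_mono[OF assms(4,3)] card_UN_le[OF assms(1), of Y] by simp
  also have "\<dots> = (\<Sum>i\<in>I. card I * card (Y i))"
    by (simp add: sum_distrib_left)
  also have "\<dots> < (\<Sum>i\<in>I. card A)"
    using small assms(1,2) by (intro sum_strict_mono) auto
  finally show False by simp
qed

text \<open>The run \<open>[a, a + R)\<close> covers the five consecutive \<open>l\<close>-intervals from the one containing
  \<open>a\<close> up to position \<open>(a div 2^l + 5) 2^l - a > 4 \<cdot> 2^l\<close>, so more than \<open>4 \<cdot> 2^l\<close> keys hash
  there; one of the five intervals receives at least \<open>4/5 \<cdot> 2^l\<close> of them other than \<open>q\<close>.\<close>
lemma crowded_interval_in_run: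
  assumes valid: "lp_valid h S T" and "finite S"
    and start: "a = 0 \<or> T (a - 1) = None" and full: "\<forall>z\<in>{a..<a + R}. T z \<noteq> None"
    and scale: "5 * 2 ^ l \<le> R"
  shows "\<exists>i\<in>{a div 2 ^ l .. a div 2 ^ l + 4}. h \<in> crowded S q l i"
proof -
  define M :: nat where "M = 2 ^ l"
  define i0 where "i0 = a div M"
  define b where "b = (i0 + 5) * M"
  have M: "0 < M" "i0 * M \<le> a" "a < i0 * M + M"
    unfolding M_def i0_def using dividend_less_div_times[of "2 ^ l" a] by (simp_all add: add.commute)
  define X where "X = {x\<in>S. h x \<in> {a..<b}}"
  have "b \<le> a + R"
    using M scale by (simp add: b_def M_def algebra_simps)
  then have "b - a \<le> card X"
    unfolding X_def using full
    by (intro run_length_le_card_hashed[OF valid \<open>finite S\<close> start]) auto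
  moreover have "4 * M < b - a"
    using M by (simp add: b_def algebra_simps)
  ultimately have "4 * M \<le> card (X - {q})"
    by (cases "q \<in> X") (simp_all add: card_Diff_singleton_if)
  moreover have "X - {q} \<subseteq> (\<Union>i\<in>{i0..i0+4}. {x \<in> S - {q}. h x \<in> ell_interval l i})"
  proof
    fix x assume x: "x \<in> X - {q}"
    then have "a \<le> h x" "h x < (i0 + 5) * M"
      unfolding X_def b_def by auto
    then have "i0 \<le> h x div M" "h x div M < i0 + 5"
      unfolding i0_def by (simp_all add: div_le_mono less_mult_imp_div_less)
    moreover have "h x \<in> ell_interval l (h x div M)"
      unfolding ell_interval_def M_def
      by (simp add: dividend_less_div_times div_times_less_eq_dividend)
    ultimately show "x \<in> (\<Union>i\<in>{i0..i0+4}. {x \<in> S - {q}. h x \<in> ell_interval l i})"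
      using x unfolding X_def by auto
  qed
  ultimately obtain i where "i \<in> {i0..i0+4}"
    and "4 * M \<le> 5 * card {x \<in> S - {q}. h x \<in> ell_interval l i}"
    using exists_large_part[of "{i0..i0+4}" "X - {q}" "\<lambda>i. {x \<in> S - {q}. h x \<in> ell_interval l i}"]
      \<open>finite S\<close> by fastforce
  then have "real (3 * M) \<le> real (4 * card {x \<in> S - {q}. h x \<in> ell_interval l i})"
    by linarith
  then have "h \<in> crowded S q l i"
    unfolding crowded_def M_def by simp
  with \<open>i \<in> {i0..i0+4}\<close> show ?thesis
    unfolding i0_def M_def by blast
qed

definition crowded_near :: "nat set \<Rightarrow> nat \<Rightarrow> nat \<Rightarrow> (nat \<Rightarrow> nat) set" where
  "crowded_near S q l = {h. \<exists>i\<in>window (h q) l. h \<in> crowded S q l i}"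

lemma long_probe_crowded_near:
  assumes valid: "lp_valid h S T" and "finite S" and "card S < 2 ^ k"
    and long: "5 < probe_len h T q"
  shows "\<exists>l\<le>k. probe_len h T q \<le> 10 * 2 ^ l \<and> h \<in> crowded_near S q l"
proof -
  define p where "p = h q"
  define f where "f = first_empty T p"
  have fe: "p \<le> f" "\<And>z. z \<in> {p..<f} \<Longrightarrow> T z \<noteq> None"
    using first_empty_spec[OF lp_validD(5)[OF valid]] unfolding f_def by blast+
  have len: "probe_len h T q = f - p + 1"
    unfolding probe_len_def f_def p_def ..
  with long fe(1) have "p + 5 \<le> f" by simp
  then have "T p \<noteq> None"
    using fe(2) by simp
  then obtain a where a: "a \<le> p" "a = 0 \<or> T (a - 1) = None" "\<forall>z\<in>{a..p}. T z \<noteq> None"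
    by (rule run_start_exists)
  define R where "R = f - a"
  have f: "f = a + R"
    using a(1) \<open>p + 5 \<le> f\<close> unfolding R_def by simp
  have full: "\<forall>z\<in>{a..<a + R}. T z \<noteq> None"
  proof
    fix z assume "z \<in> {a..<a + R}"
    then show "T z \<noteq> None"
      using a(3) fe(2) f by (cases "z \<le> p") auto
  qed
  have "R \<le> card {x\<in>S. h x \<in> {a..<a + R}}"
    using run_length_le_card_hashed[OF valid \<open>finite S\<close> a(2) full] by simp
  also have "\<dots> \<le> card S"
    using \<open>finite S\<close> by (intro card_mono) auto
  finally have "R < 2 ^ k"
    using \<open>card S < 2 ^ k\<close> by simp
  obtain l where l: "5 * 2 ^ l \<le> R" "R < 10 * 2 ^ l"
    using exists_dyadic_scale[of R] \<open>p + 5 \<le> f\<close> a(1) f by auto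
  have "(2::nat) ^ l < 2 ^ k"
    using l(1) \<open>R < 2 ^ k\<close> by linarith
  then have "l \<le> k" by simp
  obtain i where i: "i \<in> {a div 2 ^ l .. a div 2 ^ l + 4}" "h \<in> crowded S q l i"
    using crowded_interval_in_run[OF valid \<open>finite S\<close> a(2) full l(1)] by blast
  have "p < (a div 2 ^ l + 11) * 2 ^ l"
    using f l(2) \<open>p + 5 \<le> f\<close> dividend_less_div_times[of "2 ^ l" a] by (simp add: algebra_simps)
  then have "p div 2 ^ l < a div 2 ^ l + 11"
    by (rule less_mult_imp_div_less)
  moreover have "a div 2 ^ l \<le> p div 2 ^ l"
    using a(1) by (rule div_le_mono)
  ultimately have "i \<in> window p l"
    using i(1) unfolding window_def by auto
  with i(2) have "h \<in> crowded_near S q l"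
    unfolding crowded_near_def p_def by blast
  moreover have "probe_len h T q \<le> 10 * 2 ^ l"
    using len f a(1) l(2) by simp
  ultimately show ?thesis
    using \<open>l \<le> k\<close> by blast
qed

lemma probe_len_le_crowded_sum:
  assumes "lp_valid h S T" and "finite S" and "card S < 2 ^ k"
  shows "real (probe_len h T q) \<le> 5 + 10 * (\<Sum>l\<le>k. 2 ^ l * indicator (crowded_near S q l) h)"
proof (cases "5 < probe_len h T q")
  case True
  then obtain l where "l \<le> k" "probe_len h T q \<le> 10 * 2 ^ l" "h \<in> crowded_near S q l"
    using long_probe_crowded_near[OF assms] by blast
  then have "real (probe_len h T q) \<le> 10 * (2 ^ l * indicator (crowded_near S q l) h)"
    using of_nat_mono[of "probe_len h T q" "10 * 2 ^ l"] by simp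
  also have "\<dots> \<le> 10 * (\<Sum>l\<le>k. 2 ^ l * indicator (crowded_near S q l) h)"
    using \<open>l \<le> k\<close> by (intro mult_left_mono member_le_sum) auto
  finally show ?thesis by simp
next
  case False
  moreover have "0 \<le> (\<Sum>l\<le>k. 2 ^ l * indicator (crowded_near S q l) h :: real)"
    by (intro sum_nonneg) simp
  ultimately show ?thesis by simp
qed

lemma measure_Int_le_cond_pmf:
  assumes "set_pmf p \<inter> s \<noteq> {} \<Longrightarrow> measure_pmf.prob (cond_pmf p s) A \<le> c"
  shows "measure_pmf.prob p (s \<inter> A) \<le> measure_pmf.prob p s * c"
proof (cases "set_pmf p \<inter> s = {}")
  case True
  then have "measure_pmf.prob p (s \<inter> A) = 0" "measure_pmf.prob p s = 0"
    by (subst measure_pmf_zero_iff, blast)+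
  then show ?thesis by simp
next
  case False
  then have "measure_pmf.prob (cond_pmf p s) A = measure_pmf.prob p (s \<inter> A) / measure_pmf.prob p s"
    by (simp add: cond_pmf.rep_eq emeasure_measure_pmf_not_zero measure_pmf.emeasure_finite)
  moreover have "0 < measure_pmf.prob p s"
    using False by (auto intro: measure_pmf_posI)
  ultimately show ?thesis
    using assms False by (simp add: divide_le_eq mult.commute)
qed

lemma prob_union_bound_cond_pmf:
  fixes p :: "'a pmf" and f :: "'a \<Rightarrow> 'b" and E :: "'j \<Rightarrow> 'a set"
  assumes "finite Y" and range: "\<And>x. x \<in> set_pmf p \<Longrightarrow> f x \<in> Y"
    and "\<And>y. finite (J y)" and card_J: "\<And>y. card (J y) \<le> m" and "0 \<le> c"
    and cond: "\<And>y j. y \<in> Y \<Longrightarrow> j \<in> J y \<Longrightarrow> set_pmf p \<inter> {x. f x = y} \<noteq> {} \<Longrightarrow>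
      measure_pmf.prob (cond_pmf p {x. f x = y}) (E j) \<le> c"
  shows "measure_pmf.prob p {x. \<exists>j\<in>J (f x). x \<in> E j} \<le> m * c"
proof -
  let ?B = "\<lambda>y. {x. f x = y}"
  have "measure_pmf.prob p {x. \<exists>j\<in>J (f x). x \<in> E j}
      \<le> measure_pmf.prob p (\<Union>y\<in>Y. \<Union>j\<in>J y. ?B y \<inter> E j)"
    by (rule measure_pmf.finite_measure_mono_AE) (auto simp: AE_measure_pmf_iff dest: range)
  also have "\<dots> \<le> (\<Sum>y\<in>Y. measure_pmf.prob p (\<Union>j\<in>J y. ?B y \<inter> E j))"
    using \<open>finite Y\<close> by (rule measure_pmf.finite_measure_subadditive_finite) simp
  also have "\<dots> \<le> (\<Sum>y\<in>Y. \<Sum>j\<in>J y. measure_pmf.prob p (?B y \<inter> E j))"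
    using \<open>\<And>y. finite (J y)\<close>
    by (intro sum_mono measure_pmf.finite_measure_subadditive_finite) simp_all
  also have "\<dots> \<le> (\<Sum>y\<in>Y. \<Sum>j\<in>J y. measure_pmf.prob p (?B y) * c)"
    using cond by (intro sum_mono measure_Int_le_cond_pmf) blast
  also have "\<dots> \<le> (\<Sum>y\<in>Y. m * (measure_pmf.prob p (?B y) * c))"
    using card_J \<open>0 \<le> c\<close> by (intro sum_mono) (simp add: mult_right_mono)
  also have "\<dots> = m * c * measure_pmf.prob p (\<Union>y\<in>Y. ?B y)"
    using \<open>finite Y\<close>
    by (subst measure_pmf.finite_measure_finite_Union)
       (auto simp: disjoint_family_on_def sum_distrib_left mult_ac)
  also have "\<dots> \<le> m * c"
    using \<open>0 \<le> c\<close> by (simp add: mult_left_le)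
  finally show ?thesis .
qed

lemma expectation_weighted_indicators:
  fixes c :: "'i \<Rightarrow> real"
  shows "integrable (measure_pmf p) (\<lambda>x. \<Sum>i\<in>I. c i * indicator (A i) x)"
    and "measure_pmf.expectation p (\<lambda>x. \<Sum>i\<in>I. c i * indicator (A i) x)
           = (\<Sum>i\<in>I. c i * measure_pmf.prob p (A i))"
proof -
  have int: "integrable (measure_pmf p) (\<lambda>x. c i * indicator (A i) x)" for i
    by (intro integrable_mult_right integrable_real_indicator)
       (simp_all add: measure_pmf.emeasure_finite less_top[symmetric])
  show "integrable (measure_pmf p) (\<lambda>x. \<Sum>i\<in>I. c i * indicator (A i) x)"
    by (intro Bochner_Integration.integrable_sum int)
  show "measure_pmf.expectation p (\<lambda>x. \<Sum>i\<in>I. c i * indicator (A i) x)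
      = (\<Sum>i\<in>I. c i * measure_pmf.prob p (A i))"
    by (simp add: Bochner_Integration.integral_sum[OF int])
qed

lemma prob_crowded_near_le:
  assumes range: "\<forall>h\<in>set_pmf H. h q < t" and "0 \<le> c"
    and cond: "\<And>y i. y < t \<Longrightarrow> set_pmf H \<inter> {h. h q = y} \<noteq> {} \<Longrightarrow>
      measure_pmf.prob (cond_pmf H {h. h q = y}) (crowded S q l i) \<le> c"
  shows "measure_pmf.prob H (crowded_near S q l) \<le> 15 * c"
  using prob_union_bound_cond_pmf[where Y = "{..<t}" and p = H and f = "\<lambda>h. h q"
      and J = "\<lambda>y. window y l" and m = 15 and c = c and E = "crowded S q l"]
    range \<open>0 \<le> c\<close> cond finite_window card_window_le
  unfolding crowded_near_def by simp

lemma expectation_probe_len_le: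
  fixes T :: "(nat \<Rightarrow> nat) \<Rightarrow> lp_table"
  assumes valid: "\<And>h. h \<in> set_pmf H \<Longrightarrow> lp_valid h S (T h)" and "finite S" and "card S < 2 ^ k"
    and crowded: "\<And>l. l \<le> k \<Longrightarrow> measure_pmf.prob H (crowded_near S q l) \<le> c l"
  shows "measure_pmf.expectation H (\<lambda>h. real (probe_len h (T h) q))
    \<le> 5 + 10 * (\<Sum>l\<le>k. 2 ^ l * c l)"
proof -
  define F where "F h = (\<Sum>l\<le>k. 2 ^ l * indicator (crowded_near S q l) h :: real)" for h
  have F_int: "integrable (measure_pmf H) F"
    unfolding F_def by (rule expectation_weighted_indicators(1))
  have "measure_pmf.expectation H (\<lambda>h. real (probe_len h (T h) q))
      \<le> measure_pmf.expectation H (\<lambda>h. 5 + 10 * F h)"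
  proof (rule integral_mono_AE')
    show "integrable (measure_pmf H) (\<lambda>h. 5 + 10 * F h)"
      using F_int by simp
    show "AE h in measure_pmf H. real (probe_len h (T h) q) \<le> 5 + 10 * F h"
      using probe_len_le_crowded_sum[OF valid \<open>finite S\<close> \<open>card S < 2 ^ k\<close>]
      unfolding F_def by (simp add: AE_measure_pmf_iff)
    show "AE h in measure_pmf H. 0 \<le> 5 + 10 * F h"
      unfolding F_def by (intro AE_I2 add_nonneg_nonneg mult_nonneg_nonneg sum_nonneg) simp_all
  qed
  also have "\<dots> = 5 + 10 * measure_pmf.expectation H F"
    using F_int by simp
  also have "\<dots> = 5 + 10 * (\<Sum>l\<le>k. 2 ^ l * measure_pmf.prob H (crowded_near S q l))"
    unfolding F_def expectation_weighted_indicators(2) ..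
  also have "\<dots> \<le> 5 + 10 * (\<Sum>l\<le>k. 2 ^ l * c l)"
    using crowded by (intro add_left_mono mult_left_mono sum_mono) auto
  finally show ?thesis .
qed

theorem theorem4:
  shows "\<exists>C::real. \<forall>(t::nat) (k::nat) (u::nat) (H::(nat \<Rightarrow> nat) pmf) (S::nat set)
      (xs::nat list) (q::nat) (P::nat \<Rightarrow> real).
    t = 2 ^ k \<and> S \<subseteq> {..<u} \<and> card S < t \<and> distinct xs \<and> set xs = S \<and> q < u \<and>
    (\<forall>h\<in>set_pmf H. \<forall>x<u. h x < t) \<and>
    (\<forall>l\<le>k. \<forall>y<t. \<forall>i.
        set_pmf H \<inter> {h. h q = y} \<noteq> {} \<longrightarrow>
        measure_pmf.prob (cond_pmf H {h. h q = y})
          {h. real (card {x \<in> S - {q}. h x \<in> ell_interval l i}) \<ge> 3 / 4 * 2 ^ l} \<le> P l)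
    \<longrightarrow> measure_pmf.expectation H (\<lambda>h. real (probe_len h (lp_build h xs) q))
          \<le> C * (1 + (\<Sum>l\<le>k. 2 ^ l * P l))"
proof (intro exI[of _ 150] allI impI, elim conjE)
  fix t k u :: nat and H :: "(nat \<Rightarrow> nat) pmf" and S :: "nat set" and xs :: "nat list"
    and q :: nat and P :: "nat \<Rightarrow> real"
  assume "t = 2 ^ k" "S \<subseteq> {..<u}" "card S < t" "distinct xs" "set xs = S" "q < u"
    and range: "\<forall>h\<in>set_pmf H. \<forall>x<u. h x < t"
    and hyp: "\<forall>l\<le>k. \<forall>y<t. \<forall>i. set_pmf H \<inter> {h. h q = y} \<noteq> {} \<longrightarrow>
        measure_pmf.prob (cond_pmf H {h. h q = y})
          {h. real (card {x \<in> S - {q}. h x \<in> ell_interval l i}) \<ge> 3 / 4 * 2 ^ l} \<le> P l"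
  have cond: "measure_pmf.prob (cond_pmf H {h. h q = y}) (crowded S q l i) \<le> P l"
    if "l \<le> k" "y < t" "set_pmf H \<inter> {h. h q = y} \<noteq> {}" for l y i
    using hyp that unfolding crowded_def by blast
  have hq: "\<forall>h\<in>set_pmf H. h q < t"
    using range \<open>q < u\<close> by blast
  have P_nonneg: "0 \<le> P l" if "l \<le> k" for l
  proof -
    obtain h where "h \<in> set_pmf H"
      using set_pmf_not_empty[of H] by blast
    then show ?thesis
      using cond[OF that] hq measure_nonneg order_trans by blast
  qed
  have "finite S"
    using \<open>S \<subseteq> {..<u}\<close> finite_subset by blast
  have valid: "lp_valid h S (lp_build h xs)" for h
    using lp_valid_build[OF \<open>distinct xs\<close>] \<open>set xs = S\<close> by simp
  have "measure_pmf.expectation H (\<lambda>h. real (probe_len h (lp_build h xs) q))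
      \<le> 5 + 10 * (\<Sum>l\<le>k. 2 ^ l * (15 * P l))"
    using \<open>card S < t\<close> \<open>t = 2 ^ k\<close>
    by (intro expectation_probe_len_le[OF valid \<open>finite S\<close>] prob_crowded_near_le[OF hq]
        P_nonneg cond) simp_all
  then show "measure_pmf.expectation H (\<lambda>h. real (probe_len h (lp_build h xs) q))
      \<le> 150 * (1 + (\<Sum>l\<le>k. 2 ^ l * P l))"
    by (simp add: sum_distrib_left mult_ac)
qed

end
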